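(* Let $P\subseteq\mathbb{P}^{n-1}$ be a full-dimensional polytope. Then its slicing set is \[P^{[n-1]}=\{V\in\mathrm{Gr}(n-1,n)\mid \overline{\mathrm{var}}(\mathrm{C}_P^{n-1}(V))\ge1\}.\]
   Context: Work over $\mathbb{R}$. $\mathrm{Gr}(n-1,n)$ is the set of hyperplanes (codimension-one linear subspaces) of $\mathbb{R}^n$, identified with their images in $\mathbb{P}^{n-1}$. A polytope $P\subseteq\mathbb{P}^{n-1}$ is the image in $\mathbb{P}^{n-1}$ of a cone $\{\sum c_iv_i:c_i\ge0\}$ over finitely many $v_i\in\mathbb{R}^n$; full-dimensional means the underlying polytope has dimension $n-1$. $P^{[n-1]}=\{V\in\mathrm{Gr}(n-1,n)\mid V\cap P\neq\emptyset\}$. Fix an ordering $w_1,\ldots,w_f$ of the vertices of $P$ and a representative vector in $\mathbb{R}^n$ for each. For $V=\ker(a)$ with $a=(a_1,\ldots,a_n)$ a nonzero row vector, the Chow form of the vertex $w_j$ is $C_{w_j}(V)=\sum_{i=1}^n (w_j)_i a_i$, and $\mathrm{C}_P^{n-1}(V)=(C_{w_1}(V),\ldots,C_{w_f}(V))$, defined up to a common nonzero scalar. For a real vector $x$, $\overline{\mathrm{var}}(x)$ is the maximal number of sign changes in the sequence obtained from $x$ by replacing each zero entry by $+$ or $-$ in any way. *)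

theory Defs
  imports "HOL-Analysis.Analysis"
begin

definition gen_cone :: "(real^'n) list \<Rightarrow> (real^'n) set" where
  "gen_cone vs = {(\<Sum>i<length vs. c i *\<^sub>R (vs ! i)) | c. \<forall>i. c i \<ge> 0}"

text \<open>The cone is pointed (so that its image in projective space is a polytope)
  and full-dimensional (so that the polytope has dimension n-1).\<close>
definition pointed_cone :: "(real^'n) set \<Rightarrow> bool" where
  "pointed_cone C \<longleftrightarrow> (\<forall>x. x \<in> C \<and> - x \<in> C \<longrightarrow> x = 0)"

definition full_dim_polytope :: "(real^'n) list \<Rightarrow> bool" where
  "full_dim_polytope vs \<longleftrightarrow> pointed_cone (gen_cone vs) \<and> span (set vs) = UNIV"

text \<open>w is a representative (in the cone) of a vertex of P, i.e. spans an extreme ray.\<close>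
definition extreme_ray_gen :: "(real^'n) set \<Rightarrow> real^'n \<Rightarrow> bool" where
  "extreme_ray_gen C w \<longleftrightarrow> w \<in> C \<and> w \<noteq> 0 \<and>
     (\<forall>x y. x \<in> C \<and> y \<in> C \<and> w = x + y \<longrightarrow> (\<exists>t\<ge>0. x = t *\<^sub>R w))"

definition vertex_ordering :: "(real^'n) list \<Rightarrow> (real^'n) list \<Rightarrow> bool" where
  "vertex_ordering vs ws \<longleftrightarrow>
     (\<forall>j<length ws. extreme_ray_gen (gen_cone vs) (ws ! j)) \<and>
     (\<forall>j<length ws. \<forall>k<length ws. j \<noteq> k \<longrightarrow> \<not> (\<exists>t>0. ws ! j = t *\<^sub>R ws ! k)) \<and>
     (\<forall>w. extreme_ray_gen (gen_cone vs) w \<longrightarrow> (\<exists>j<length ws. \<exists>t>0. w = t *\<^sub>R ws ! j))"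

text \<open>Chow form vector for V = ker a.\<close>
definition chow_vec :: "(real^'n) list \<Rightarrow> real^'n \<Rightarrow> real list" where
  "chow_vec ws a = map (\<lambda>w. \<Sum>i\<in>UNIV. (w $ i) * (a $ i)) ws"

definition sign_changes :: "real list \<Rightarrow> nat" where
  "sign_changes ys = card {i. Suc i < length ys \<and> ys ! i * ys ! (Suc i) < 0}"

definition var_bar :: "real list \<Rightarrow> nat" where
  "var_bar xs = Max {sign_changes ys | ys. length ys = length xs \<and>
      (\<forall>i<length xs. ys ! i \<in> {-1, 1} \<and> (xs ! i \<noteq> 0 \<longrightarrow> ys ! i = sgn (xs ! i)))}"

text \<open>Slicing set: hyperplanes ker a (a \<noteq> 0) meeting P, i.e. containing a nonzero point of the cone.\<close>
definition slicing_set :: "(real^'n) list \<Rightarrow> (real^'n) set" where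
  "slicing_set vs = {a. a \<noteq> 0 \<and> (\<exists>x\<in>gen_cone vs. x \<noteq> 0 \<and> a \<bullet> x = 0)}"

end

theory Submission
  imports Defs
begin

text \<open>Every point of the pointed cone over \<open>P\<close> is a nonnegative combination of generators
  spanning extreme rays (Minkowski), i.e. of the vertex representatives \<open>w\<^sub>j\<close>. Hence, if
  \<open>a\<close> is positive (or negative) on all vertices, then \<open>ker a\<close> misses \<open>P\<close>; and if \<open>a\<close>
  vanishes on all vertices, it vanishes on the span of \<open>P\<close>, which is everything. Otherwise two
  distinct vertices satisfy \<open>a \<bullet> w\<^sub>j \<le> 0 \<le> a \<bullet> w\<^sub>k\<close>. Conversely, such a pair yields the point
  \<open>(a \<bullet> w\<^sub>k) w\<^sub>j - (a \<bullet> w\<^sub>j) w\<^sub>k\<close> of \<open>P \<inter> ker a\<close>, which is nonzero by pointedness (or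
  \<open>w\<^sub>j\<close> itself if \<open>a \<bullet> w\<^sub>j = 0\<close>). Finally, \<open>var_bar x \<ge> 1\<close> holds exactly when two distinct
  entries satisfy \<open>x\<^sub>j \<le> 0 \<le> x\<^sub>k\<close>: resolve the zeros so that \<open>x\<^sub>j\<close> becomes \<open>-\<close> and \<open>x\<^sub>k\<close>
  becomes \<open>+\<close>; then some adjacent pair between them changes sign.\<close>

definition cone_span :: "('i \<Rightarrow> 'a::real_vector) \<Rightarrow> 'i set \<Rightarrow> 'a set" where
  "cone_span f I = {(\<Sum>i\<in>I. c i *\<^sub>R f i) | c. \<forall>i\<in>I. 0 \<le> c i}"

lemma cone_spanI: "(\<And>i. i \<in> I \<Longrightarrow> 0 \<le> c i) \<Longrightarrow> (\<Sum>i\<in>I. c i *\<^sub>R f i) \<in> cone_span f I"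
  unfolding cone_span_def by blast

lemma cone_spanE:
  assumes "x \<in> cone_span f I"
  obtains c where "\<forall>i\<in>I. 0 \<le> c i" "x = (\<Sum>i\<in>I. c i *\<^sub>R f i)"
  using assms unfolding cone_span_def by blast

lemma convex_cone_cone_span: "convex_cone (cone_span f I)"
proof -
  have "0 \<in> cone_span f I"
    using cone_spanI[of I "\<lambda>_. 0" f] by simp
  moreover have "x + y \<in> cone_span f I" if x: "x \<in> cone_span f I" and y: "y \<in> cone_span f I" for x y
  proof -
    obtain c where c: "\<forall>i\<in>I. 0 \<le> c i" "x = (\<Sum>i\<in>I. c i *\<^sub>R f i)"
      using x by (rule cone_spanE)
    obtain d where d: "\<forall>i\<in>I. 0 \<le> d i" "y = (\<Sum>i\<in>I. d i *\<^sub>R f i)"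
      using y by (rule cone_spanE)
    have "x + y = (\<Sum>i\<in>I. (c i + d i) *\<^sub>R f i)"
      by (simp add: c(2) d(2) scaleR_add_left sum.distrib)
    then show ?thesis
      using cone_spanI[of I "\<lambda>i. c i + d i" f] c(1) d(1) by simp
  qed
  moreover have "t *\<^sub>R x \<in> cone_span f I" if x: "x \<in> cone_span f I" and t: "0 \<le> t" for x t
  proof -
    obtain c where c: "\<forall>i\<in>I. 0 \<le> c i" "x = (\<Sum>i\<in>I. c i *\<^sub>R f i)"
      using x by (rule cone_spanE)
    have "t *\<^sub>R x = (\<Sum>i\<in>I. (t * c i) *\<^sub>R f i)"
      by (simp add: c(2) scaleR_sum_right)
    then show ?thesis
      using cone_spanI[of I "\<lambda>i. t * c i" f] c(1) t by simp
  qed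
  ultimately show ?thesis
    by (simp add: convex_cone_iff)
qed

lemma cone_span_generator:
  assumes "finite I" "i \<in> I"
  shows "f i \<in> cone_span f I"
proof -
  have "(\<Sum>j\<in>I. (if j = i then 1 else 0) *\<^sub>R f j) = (\<Sum>j\<in>I. if j = i then f i else 0)"
    by (intro sum.cong) auto
  also have "\<dots> = f i"
    using assms by simp
  finally show ?thesis
    using cone_spanI[of I "\<lambda>j. if j = i then 1 else 0" f] by simp
qed

lemma cone_span_subset:
  assumes "convex_cone C" "finite I" "\<And>i. i \<in> I \<Longrightarrow> f i \<in> C"
  shows "cone_span f I \<subseteq> C"
proof
  fix x assume "x \<in> cone_span f I"
  then obtain c where c: "\<forall>i\<in>I. 0 \<le> c i" and x: "x = (\<Sum>i\<in>I. c i *\<^sub>R f i)"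
    by (rule cone_spanE)
  have "(\<Sum>i\<in>I. c i *\<^sub>R f i) \<in> C"
    using assms(2,3) c
  proof (induction I rule: finite_induct)
    case empty
    then show ?case using assms(1) convex_cone_contains_0 by simp
  next
    case (insert i I)
    then show ?case using assms(1) by (simp add: convex_cone_add convex_cone_scaleR)
  qed
  then show "x \<in> C" using x by simp
qed

lemma cone_span_mono:
  assumes "finite I" "J \<subseteq> I"
  shows "cone_span f J \<subseteq> cone_span f I"
proof (rule cone_span_subset[OF convex_cone_cone_span])
  show "finite J"
    using assms by (rule finite_subset[rotated])
  show "f j \<in> cone_span f I" if "j \<in> J" for j
    using assms that by (blast intro: cone_span_generator)
qed

lemma cone_span_remove_redundant:
  assumes "finite I" "f i \<in> cone_span f (I - {i})"
  shows "cone_span f I = cone_span f (I - {i})"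
proof
  show "cone_span f I \<subseteq> cone_span f (I - {i})"
    using assms by (intro cone_span_subset convex_cone_cone_span)
      (auto intro: cone_span_generator)
  show "cone_span f (I - {i}) \<subseteq> cone_span f I"
    using assms(1) by (rule cone_span_mono) blast
qed

lemma cone_span_split:
  assumes "finite I" "i \<in> I" "x \<in> cone_span f I"
  obtains t p where "0 \<le> t" "p \<in> cone_span f (I - {i})" "x = t *\<^sub>R f i + p"
proof -
  obtain c where c: "\<forall>j\<in>I. 0 \<le> c j" and x: "x = (\<Sum>j\<in>I. c j *\<^sub>R f j)"
    using assms(3) by (rule cone_spanE)
  have "x = c i *\<^sub>R f i + (\<Sum>j\<in>I - {i}. c j *\<^sub>R f j)"
    using assms(1,2) x by (simp add: sum.remove)
  moreover have "(\<Sum>j\<in>I - {i}. c j *\<^sub>R f j) \<in> cone_span f (I - {i})"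
    using c by (intro cone_spanI) simp
  ultimately show thesis
    using that c assms(2) by blast
qed

lemma pointed_cone_add_eq_0:
  assumes "pointed_cone C" "x \<in> C" "y \<in> C" "x + y = 0"
  shows "x = 0"
  using assms minus_unique[OF assms(4)] unfolding pointed_cone_def by metis

lemma non_extreme_generator_redundant:
  assumes cone: "convex_cone C" "pointed_cone C" and span: "C = cone_span f I"
    and "finite I" "i \<in> I" "f i \<noteq> 0" "\<not> extreme_ray_gen C (f i)"
  shows "f i \<in> cone_span f (I - {i})"
proof -
  define D where "D = cone_span f (I - {i})"
  have "f i \<in> C"
    using span assms(4,5) by (simp add: cone_span_generator)
  then obtain x y where "x \<in> C" "y \<in> C" "f i = x + y"
    and x_not_multiple: "\<And>t. 0 \<le> t \<Longrightarrow> x \<noteq> t *\<^sub>R f i"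
    using assms(6,7) unfolding extreme_ray_gen_def by blast
  obtain s p where "0 \<le> s" "p \<in> D" and x: "x = s *\<^sub>R f i + p"
    using cone_span_split[OF assms(4,5)] \<open>x \<in> C\<close> span unfolding D_def by metis
  obtain t q where "0 \<le> t" "q \<in> D" and y: "y = t *\<^sub>R f i + q"
    using cone_span_split[OF assms(4,5)] \<open>y \<in> C\<close> span unfolding D_def by metis
  have "D \<subseteq> C"
    unfolding D_def span using assms(4) by (rule cone_span_mono) blast
  have balance: "(1 - (s + t)) *\<^sub>R f i = p + q"
    using \<open>f i = x + y\<close> unfolding x y by (simp add: algebra_simps)
  show ?thesis
  proof (cases "s + t < 1")
    case True
    then have "f i = (1 / (1 - (s + t))) *\<^sub>R (p + q)"
      by (simp flip: balance)
    moreover have "p + q \<in> D"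
      using \<open>p \<in> D\<close> \<open>q \<in> D\<close> convex_cone_add convex_cone_cone_span unfolding D_def by blast
    moreover have "0 \<le> 1 / (1 - (s + t))"
      using True by simp
    ultimately show ?thesis
      using convex_cone_scaleR[OF convex_cone_cone_span] unfolding D_def by metis
  next
    case False
    then have "(s + t - 1) *\<^sub>R f i \<in> C"
      using cone(1) \<open>f i \<in> C\<close> by (simp add: convex_cone_scaleR)
    moreover have "(p + q) + (s + t - 1) *\<^sub>R f i = 0"
      using balance by (simp add: algebra_simps)
    ultimately have "p + q = 0"
      using pointed_cone_add_eq_0[OF cone(2)] \<open>p \<in> D\<close> \<open>q \<in> D\<close> \<open>D \<subseteq> C\<close> cone(1)
      by (meson convex_cone_add subsetD)
    then have "p = 0"
      using pointed_cone_add_eq_0[OF cone(2)] \<open>p \<in> D\<close> \<open>q \<in> D\<close> \<open>D \<subseteq> C\<close> by blast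
    then show ?thesis
      using x_not_multiple[OF \<open>0 \<le> s\<close>] x by simp
  qed
qed

text \<open>Minkowski's theorem for finitely generated pointed cones, proved by discarding the
  generators that do not span extreme rays one at a time.\<close>
lemma pointed_cone_span_extreme_rays:
  assumes "convex_cone C" "pointed_cone C" "finite I" "C = cone_span f I"
  shows "\<exists>J\<subseteq>I. C = cone_span f J \<and> (\<forall>j\<in>J. f j = 0 \<or> extreme_ray_gen C (f j))"
  using assms(3,4)
proof (induction I rule: finite_psubset_induct)
  case (psubset I)
  show ?case
  proof (cases "\<forall>j\<in>I. f j = 0 \<or> extreme_ray_gen C (f j)")
    case True
    with psubset.prems show ?thesis by blast
  next
    case False
    then obtain i where "i \<in> I" "f i \<noteq> 0" "\<not> extreme_ray_gen C (f i)" by blast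
    then have "C = cone_span f (I - {i})"
      using non_extreme_generator_redundant[OF assms(1,2)] cone_span_remove_redundant
        psubset.hyps psubset.prems by metis
    then show ?thesis
      using psubset.IH[of "I - {i}"] \<open>i \<in> I\<close> by blast
  qed
qed

lemma inner_nonneg_on_cone_span:
  assumes "\<And>i. i \<in> I \<Longrightarrow> 0 \<le> a \<bullet> f i" "x \<in> cone_span f I"
  shows "0 \<le> a \<bullet> x"
proof -
  obtain c where "\<forall>i\<in>I. 0 \<le> c i" "x = (\<Sum>i\<in>I. c i *\<^sub>R f i)"
    using assms(2) by (rule cone_spanE)
  then show ?thesis
    using assms(1) by (simp add: inner_sum_right sum_nonneg)
qed

lemma inner_pos_on_cone_span:
  assumes "finite I" "\<And>i. i \<in> I \<Longrightarrow> f i = 0 \<or> 0 < a \<bullet> f i"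
    and "x \<in> cone_span f I" "x \<noteq> 0"
  shows "0 < a \<bullet> x"
proof (rule ccontr)
  assume "\<not> 0 < a \<bullet> x"
  obtain c where c: "\<forall>i\<in>I. 0 \<le> c i" and x: "x = (\<Sum>i\<in>I. c i *\<^sub>R f i)"
    using assms(3) by (rule cone_spanE)
  have terms_nonneg: "0 \<le> c i * (a \<bullet> f i)" if "i \<in> I" for i
    using assms(2)[OF that] c that by auto
  have "(\<Sum>i\<in>I. c i * (a \<bullet> f i)) = a \<bullet> x"
    by (simp add: x inner_sum_right)
  moreover have "0 \<le> (\<Sum>i\<in>I. c i * (a \<bullet> f i))"
    using terms_nonneg by (rule sum_nonneg)
  ultimately have "(\<Sum>i\<in>I. c i * (a \<bullet> f i)) = 0"
    using \<open>\<not> 0 < a \<bullet> x\<close> by linarith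
  then have "\<forall>i\<in>I. c i * (a \<bullet> f i) = 0"
    using sum_nonneg_eq_0_iff[OF assms(1) terms_nonneg] by simp
  then have "\<forall>i\<in>I. c i *\<^sub>R f i = 0"
    using assms(2) by (metis mult_eq_0_iff less_irrefl scaleR_eq_0_iff)
  then have "x = 0"
    unfolding x by (rule sum.neutral)
  with assms(4) show False ..
qed

lemma hyperplane_meets_pointed_cone:
  fixes a :: "real^'n"
  assumes C: "convex_cone C" "pointed_cone C" and "u \<in> C" "v \<in> C" "u \<noteq> 0" "v \<noteq> 0"
    and "a \<bullet> u \<le> 0" "0 \<le> a \<bullet> v"
  shows "\<exists>x\<in>C. x \<noteq> 0 \<and> a \<bullet> x = 0"
proof (cases "a \<bullet> u = 0")
  case True
  then show ?thesis using \<open>u \<in> C\<close> \<open>u \<noteq> 0\<close> by blast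
next
  case False
  define b where "b = - (a \<bullet> u)"
  have "0 < b"
    using False \<open>a \<bullet> u \<le> 0\<close> by (simp add: b_def)
  have u': "(a \<bullet> v) *\<^sub>R u \<in> C" and v': "b *\<^sub>R v \<in> C"
    using \<open>u \<in> C\<close> \<open>v \<in> C\<close> \<open>0 \<le> a \<bullet> v\<close> \<open>0 < b\<close> by (simp_all add: convex_cone_scaleR[OF C(1)])
  define x where "x = (a \<bullet> v) *\<^sub>R u + b *\<^sub>R v"
  have "x \<in> C"
    unfolding x_def using u' v' by (rule convex_cone_add[OF C(1)])
  moreover have "x \<noteq> 0"
  proof
    assume "x = 0"
    then have "b *\<^sub>R v + (a \<bullet> v) *\<^sub>R u = 0"
      by (simp add: x_def add.commute)
    then have "b *\<^sub>R v = 0"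
      using pointed_cone_add_eq_0[OF C(2) v' u'] by blast
    then show False
      using \<open>0 < b\<close> \<open>v \<noteq> 0\<close> by simp
  qed
  moreover have "a \<bullet> x = 0"
    by (simp add: x_def b_def inner_diff_right)
  ultimately show ?thesis by blast
qed

lemma gen_cone_eq_cone_span: "gen_cone vs = cone_span ((!) vs) {..<length vs}"
proof
  show "gen_cone vs \<subseteq> cone_span ((!) vs) {..<length vs}"
  proof
    fix x assume "x \<in> gen_cone vs"
    then obtain c where "x = (\<Sum>i<length vs. c i *\<^sub>R vs ! i)" "\<forall>i. 0 \<le> c i"
      unfolding gen_cone_def by blast
    then show "x \<in> cone_span ((!) vs) {..<length vs}"
      using cone_spanI[of "{..<length vs}" c "(!) vs"] by simp
  qed
  show "cone_span ((!) vs) {..<length vs} \<subseteq> gen_cone vs"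
  proof
    fix x assume "x \<in> cone_span ((!) vs) {..<length vs}"
    then obtain c where c: "\<forall>i\<in>{..<length vs}. 0 \<le> c i"
      and x: "x = (\<Sum>i<length vs. c i *\<^sub>R vs ! i)"
      by (rule cone_spanE)
    have "x = (\<Sum>i<length vs. max 0 (c i) *\<^sub>R vs ! i)"
      unfolding x using c by (intro sum.cong) simp_all
    then show "x \<in> gen_cone vs"
      unfolding gen_cone_def by (intro CollectI exI[of _ "\<lambda>i. max 0 (c i)"]) simp
  qed
qed

lemma convex_cone_gen_cone: "convex_cone (gen_cone vs)"
  by (simp add: gen_cone_eq_cone_span convex_cone_cone_span)

lemma set_subset_gen_cone: "set vs \<subseteq> gen_cone vs"
  by (auto simp: gen_cone_eq_cone_span in_set_conv_nth intro: cone_span_generator)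

lemma vertex_in_gen_cone:
  assumes "vertex_ordering vs ws" "w \<in> set ws"
  shows "w \<in> gen_cone vs" "w \<noteq> 0"
  using assms unfolding vertex_ordering_def extreme_ray_gen_def in_set_conv_nth by blast+

lemma gen_cone_vertex_rays:
  assumes "pointed_cone (gen_cone vs)" "vertex_ordering vs ws"
  obtains J where "finite J" "gen_cone vs = cone_span ((!) vs) J"
    "\<forall>j\<in>J. vs ! j = 0 \<or> (\<exists>w\<in>set ws. \<exists>t>0. vs ! j = t *\<^sub>R w)"
proof -
  obtain J where J: "J \<subseteq> {..<length vs}" "gen_cone vs = cone_span ((!) vs) J"
    "\<forall>j\<in>J. vs ! j = 0 \<or> extreme_ray_gen (gen_cone vs) (vs ! j)"
    using pointed_cone_span_extreme_rays[OF convex_cone_gen_cone assms(1) finite_lessThan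
        gen_cone_eq_cone_span] by blast
  have "\<exists>w\<in>set ws. \<exists>t>0. v = t *\<^sub>R w" if "extreme_ray_gen (gen_cone vs) v" for v
    using assms(2) that unfolding vertex_ordering_def by (metis nth_mem)
  moreover have "finite J"
    using J(1) finite_subset by blast
  ultimately show thesis
    using that J by blast
qed

lemma inner_nonneg_on_gen_cone:
  assumes "pointed_cone (gen_cone vs)" "vertex_ordering vs ws"
    and "\<forall>w\<in>set ws. 0 \<le> a \<bullet> w" "x \<in> gen_cone vs"
  shows "0 \<le> a \<bullet> x"
proof -
  obtain J where "finite J" and J: "gen_cone vs = cone_span ((!) vs) J"
    and rays: "\<forall>j\<in>J. vs ! j = 0 \<or> (\<exists>w\<in>set ws. \<exists>t>0. vs ! j = t *\<^sub>R w)"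
    by (rule gen_cone_vertex_rays[OF assms(1,2)])
  have "0 \<le> a \<bullet> vs ! j" if j: "j \<in> J" for j
  proof (cases "vs ! j = 0")
    case False
    then obtain w t where "w \<in> set ws" "0 < t" "vs ! j = t *\<^sub>R w"
      using rays j by blast
    then show ?thesis
      using assms(3) by (simp add: inner_scaleR_right)
  qed simp
  then show ?thesis
    using assms(4) unfolding J by (rule inner_nonneg_on_cone_span)
qed

lemma inner_pos_on_gen_cone:
  assumes "pointed_cone (gen_cone vs)" "vertex_ordering vs ws"
    and "\<forall>w\<in>set ws. 0 < a \<bullet> w" "x \<in> gen_cone vs" "x \<noteq> 0"
  shows "0 < a \<bullet> x"
proof -
  obtain J where "finite J" and J: "gen_cone vs = cone_span ((!) vs) J"
    and rays: "\<forall>j\<in>J. vs ! j = 0 \<or> (\<exists>w\<in>set ws. \<exists>t>0. vs ! j = t *\<^sub>R w)"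
    by (rule gen_cone_vertex_rays[OF assms(1,2)])
  have "vs ! j = 0 \<or> 0 < a \<bullet> vs ! j" if j: "j \<in> J" for j
  proof (cases "vs ! j = 0")
    case False
    then obtain w t where "w \<in> set ws" "0 < t" "vs ! j = t *\<^sub>R w"
      using rays j by blast
    then show ?thesis
      using assms(3) by (simp add: inner_scaleR_right)
  qed simp
  with \<open>finite J\<close> show ?thesis
    using assms(4,5) unfolding J by (rule inner_pos_on_cone_span)
qed

definition weakly_changes_sign :: "real list \<Rightarrow> bool" where
  "weakly_changes_sign xs \<longleftrightarrow> (\<exists>j<length xs. \<exists>k<length xs. j \<noteq> k \<and> xs ! j \<le> 0 \<and> 0 \<le> xs ! k)"

lemma weakly_changes_signI:
  assumes "\<not> (\<forall>x\<in>set xs. 0 < x)" "\<not> (\<forall>x\<in>set xs. x < 0)" "\<not> (\<forall>x\<in>set xs. x = 0)"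
  shows "weakly_changes_sign xs"
proof -
  obtain j k l where jkl: "j < length xs" "xs ! j \<le> 0" "k < length xs" "0 \<le> xs ! k"
    "l < length xs" "xs ! l \<noteq> 0"
    using assms by (auto simp: in_set_conv_nth not_less)
  show ?thesis
  proof (cases "j = k")
    case False
    with jkl show ?thesis unfolding weakly_changes_sign_def by blast
  next
    case True
    then have "xs ! j = 0" "l \<noteq> j"
      using jkl by auto
    then show ?thesis
      using jkl unfolding weakly_changes_sign_def by (cases "xs ! l < 0") force+
  qed
qed

definition sign_resolutions :: "real list \<Rightarrow> real list set" where
  "sign_resolutions xs = {ys. length ys = length xs \<and>
      (\<forall>i<length xs. ys ! i \<in> {-1, 1} \<and> (xs ! i \<noteq> 0 \<longrightarrow> ys ! i = sgn (xs ! i)))}"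

lemma var_bar_eq_Max: "var_bar xs = Max (sign_changes ` sign_resolutions xs)"
  unfolding var_bar_def sign_resolutions_def by (rule arg_cong[where f = Max]) blast

lemma finite_sign_resolutions: "finite (sign_resolutions xs)"
proof (rule finite_subset)
  show "sign_resolutions xs \<subseteq> {ys. set ys \<subseteq> {-1, 1} \<and> length ys = length xs}"
    by (auto simp: sign_resolutions_def in_set_conv_nth)
  show "finite {ys. set ys \<subseteq> {-1, 1::real} \<and> length ys = length xs}"
    by (rule finite_lists_length_eq) simp
qed

lemma sign_resolutions_nonempty: "sign_resolutions xs \<noteq> {}"
proof -
  have "map (\<lambda>x. if 0 < x then 1 else -1) xs \<in> sign_resolutions xs"
    by (auto simp: sign_resolutions_def sgn_if)
  then show ?thesis by blast
qed

lemma sign_resolution_nth: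
  assumes "ys \<in> sign_resolutions xs" "i < length xs"
  shows "ys ! i = -1 \<and> xs ! i \<le> 0 \<or> ys ! i = 1 \<and> 0 \<le> xs ! i"
proof -
  have "ys ! i \<in> {-1, 1}" "xs ! i \<noteq> 0 \<Longrightarrow> ys ! i = sgn (xs ! i)"
    using assms unfolding sign_resolutions_def by auto
  then show ?thesis
    by (cases "xs ! i = 0") (auto simp: sgn_if split: if_splits)
qed

lemma one_le_sign_changes_iff:
  "1 \<le> sign_changes ys \<longleftrightarrow> (\<exists>i. Suc i < length ys \<and> ys ! i * ys ! Suc i < 0)"
proof -
  have "finite {i. Suc i < length ys \<and> ys ! i * ys ! Suc i < 0}"
    by (rule finite_subset[of _ "{..<length ys}"]) auto
  then show ?thesis
    unfolding sign_changes_def by (simp add: Suc_le_eq card_gt_0_iff)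
qed

lemma exists_adjacent_change:
  assumes "j \<le> k" "g j \<noteq> g k"
  shows "\<exists>i. j \<le> i \<and> i < k \<and> g i \<noteq> g (Suc i)"
proof (rule ccontr)
  assume no_change: "\<nexists>i. j \<le> i \<and> i < k \<and> g i \<noteq> g (Suc i)"
  have "g (j + d) = g j" if "j + d \<le> k" for d
    using that
  proof (induction d)
    case (Suc d)
    have "\<not> (j \<le> j + d \<and> j + d < k \<and> g (j + d) \<noteq> g (Suc (j + d)))"
      using no_change by blast
    then show ?case
      using Suc by simp
  qed simp
  from this[of "k - j"] assms show False
    by simp
qed

lemma weakly_changes_sign_if_resolution_changes_sign:
  assumes ys: "ys \<in> sign_resolutions xs" and "1 \<le> sign_changes ys"
  shows "weakly_changes_sign xs"
proof -
  obtain i where "Suc i < length ys" and change: "ys ! i * ys ! Suc i < 0"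
    using \<open>1 \<le> sign_changes ys\<close> unfolding one_le_sign_changes_iff by blast
  moreover have "length ys = length xs"
    using ys by (simp add: sign_resolutions_def)
  ultimately have i: "i < length xs" "Suc i < length xs"
    by simp_all
  have "xs ! i \<le> 0 \<and> 0 \<le> xs ! Suc i \<or> xs ! Suc i \<le> 0 \<and> 0 \<le> xs ! i"
    using sign_resolution_nth[OF ys i(1)] sign_resolution_nth[OF ys i(2)] change by auto
  then show ?thesis
    unfolding weakly_changes_sign_def using i n_not_Suc_n by metis
qed

lemma resolution_changes_sign_if_weakly_changes_sign:
  assumes "weakly_changes_sign xs"
  shows "\<exists>ys\<in>sign_resolutions xs. 1 \<le> sign_changes ys"
proof -
  obtain j k where jk: "j < length xs" "k < length xs" "j \<noteq> k" "xs ! j \<le> 0" "0 \<le> xs ! k"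
    using assms unfolding weakly_changes_sign_def by blast
  define ys where "ys = map (\<lambda>i. if i = j then -1 else if i = k then 1
      else if 0 < xs ! i then 1 else -1 :: real) [0..<length xs]"
  have len: "length ys = length xs"
    by (simp add: ys_def)
  have ys_pm: "ys ! i \<in> {-1, 1}" if "i < length xs" for i
    using that by (simp add: ys_def)
  have "ys \<in> sign_resolutions xs"
    using jk by (auto simp: sign_resolutions_def ys_def sgn_if)
  have "ys ! min j k \<noteq> ys ! max j k"
    using jk by (simp add: ys_def min_def max_def)
  moreover have "min j k \<le> max j k"
    by simp
  ultimately obtain i where i: "i < max j k" "ys ! i \<noteq> ys ! Suc i"
    using exists_adjacent_change[of "min j k" "max j k" "(!) ys"] by blast
  have "Suc i < length ys"
    using i(1) jk len by simp
  moreover have "ys ! i * ys ! Suc i < 0"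
    using ys_pm[of i] ys_pm[of "Suc i"] i(2) \<open>Suc i < length ys\<close> len by auto
  ultimately have "1 \<le> sign_changes ys"
    unfolding one_le_sign_changes_iff by blast
  with \<open>ys \<in> sign_resolutions xs\<close> show ?thesis
    by blast
qed

lemma one_le_var_bar_iff: "1 \<le> var_bar xs \<longleftrightarrow> weakly_changes_sign xs"
proof -
  have "1 \<le> var_bar xs \<longleftrightarrow> (\<exists>ys\<in>sign_resolutions xs. 1 \<le> sign_changes ys)"
    unfolding var_bar_eq_Max
    using finite_sign_resolutions sign_resolutions_nonempty by (simp add: Max_ge_iff)
  then show ?thesis
    using weakly_changes_sign_if_resolution_changes_sign
      resolution_changes_sign_if_weakly_changes_sign by blast
qed

lemma chow_vec_eq_map_inner: "chow_vec ws a = map (\<lambda>w. a \<bullet> w) ws"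
  by (simp add: chow_vec_def inner_vec_def mult.commute)

lemma slicing_set_iff_weakly_changes_sign:
  assumes "full_dim_polytope vs" "vertex_ordering vs ws"
  shows "a \<in> slicing_set vs \<longleftrightarrow> a \<noteq> 0 \<and> weakly_changes_sign (map (\<lambda>w. a \<bullet> w) ws)"
proof
  have pointed: "pointed_cone (gen_cone vs)"
    using assms(1) unfolding full_dim_polytope_def by blast
  assume "a \<in> slicing_set vs"
  then obtain x where "a \<noteq> 0" "x \<in> gen_cone vs" "x \<noteq> 0" "a \<bullet> x = 0"
    unfolding slicing_set_def by blast
  have "\<not> (\<forall>w\<in>set ws. 0 < a \<bullet> w)"
    using inner_pos_on_gen_cone[OF pointed assms(2) _ \<open>x \<in> gen_cone vs\<close> \<open>x \<noteq> 0\<close>]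
      \<open>a \<bullet> x = 0\<close> by force
  moreover have "\<not> (\<forall>w\<in>set ws. a \<bullet> w < 0)"
    using inner_pos_on_gen_cone[OF pointed assms(2) _ \<open>x \<in> gen_cone vs\<close> \<open>x \<noteq> 0\<close>, of "- a"]
      \<open>a \<bullet> x = 0\<close> by force
  moreover have "\<not> (\<forall>w\<in>set ws. a \<bullet> w = 0)"
  proof
    assume "\<forall>w\<in>set ws. a \<bullet> w = 0"
    then have "a \<bullet> y = 0" if "y \<in> gen_cone vs" for y
      using inner_nonneg_on_gen_cone[OF pointed assms(2) _ that, of a]
        inner_nonneg_on_gen_cone[OF pointed assms(2) _ that, of "- a"] by force
    then have "span (set vs) \<subseteq> {y. a \<bullet> y = 0}"
      using set_subset_gen_cone by (intro span_minimal subspace_hyperplane) blast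
    then have "a \<bullet> a = 0"
      using assms(1) unfolding full_dim_polytope_def by blast
    with \<open>a \<noteq> 0\<close> show False by simp
  qed
  ultimately show "a \<noteq> 0 \<and> weakly_changes_sign (map (\<lambda>w. a \<bullet> w) ws)"
    using \<open>a \<noteq> 0\<close> by (simp add: weakly_changes_signI)
next
  assume "a \<noteq> 0 \<and> weakly_changes_sign (map (\<lambda>w. a \<bullet> w) ws)"
  then obtain u v where "u \<in> set ws" "v \<in> set ws" "a \<bullet> u \<le> 0" "0 \<le> a \<bullet> v"
    unfolding weakly_changes_sign_def by (metis length_map nth_map nth_mem)
  then have "\<exists>x\<in>gen_cone vs. x \<noteq> 0 \<and> a \<bullet> x = 0"
    using assms(1) vertex_in_gen_cone[OF assms(2)] unfolding full_dim_polytope_def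
    by (intro hyperplane_meets_pointed_cone[OF convex_cone_gen_cone]) auto
  then show "a \<in> slicing_set vs"
    using \<open>a \<noteq> 0 \<and> _\<close> unfolding slicing_set_def by blast
qed

theorem corollary5p3:
  fixes vs ws :: "(real^'n) list"
  assumes "full_dim_polytope vs"
    and "vertex_ordering vs ws"
  shows "slicing_set vs = {a. a \<noteq> 0 \<and> var_bar (chow_vec ws a) \<ge> 1}"
proof -
  have "a \<in> slicing_set vs \<longleftrightarrow> a \<noteq> 0 \<and> 1 \<le> var_bar (chow_vec ws a)" for a
    unfolding chow_vec_eq_map_inner one_le_var_bar_iff
    by (rule slicing_set_iff_weakly_changes_sign[OF assms])
  then show ?thesis
    by blast
qed

end
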